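(* $L^\infty(\mathbb R^n)\cap{\rm BMO}^\Phi(\mathbb R^n)=L^\infty(\mathbb R^n)\cap{\rm bmo}^\Phi(\mathbb R^n)$; equivalently, $L^\infty(\mathbb R^n)\cap(H^\Phi_*(\mathbb R^n))^*=L^\infty(\mathbb R^n)\cap{\rm bmo}^\Phi(\mathbb R^n)$.
   Context: $\Phi(\tau):=\tau/\log(e+\tau)$. ${\rm BMO}^\Phi(\mathbb R^n)$ is the set of $f\in L^1_{\rm loc}$ with $\|f\|_{{\rm BMO}^\Phi}:=\sup_B\frac{\log(e+1/|B|)}{|B|}\int_B|f-f_B|\,dx<\infty$ (sup over all balls; $f_B$ the mean of $f$ on $B$). ${\rm bmo}^\Phi(\mathbb R^n)$ is the set of $f\in L^1_{\rm loc}$ with $\sup_{B:|B|<1}\frac{\log(e+1/|B|)}{|B|}\int_B|f-f_B|+\sup_{B:|B|\ge1}\frac{\log(e+1/|B|)}{|B|}\int_B|f|<\infty$. ${\rm BMO}^\Phi(\mathbb R^n)$ is the dual of the variant Orlicz Hardy space $H^\Phi_*(\mathbb R^n):=\{f\in\mathcal S':\sum_{k\in\mathbb Z^n}\|M(f,\varphi)\mathbf 1_{k+[0,1)^n}\|_{L^\Phi}<\infty\}$, where $M(f,\varphi)(x)=\sup_{s>0}|f*\varphi_s(x)|$ for a fixed $\varphi\in\mathcal S$ with $\int\varphi\ne0$ and $\|h\|_{L^\Phi}:=\inf\{\lambda>0:\int\Phi(|h|/\lambda)\le1\}$. *)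

theory Defs
  imports "HOL-Analysis.Analysis"
begin

text \<open>Functions on R^n are real-valued functions on the type real^'n (n = CARD('n)).
  Balls are open Euclidean balls of positive radius; |B| is Lebesgue measure.\<close>

definition loc_integrable :: "(real^'n \<Rightarrow> real) \<Rightarrow> bool" where
  "loc_integrable f \<longleftrightarrow> (\<forall>x r. set_integrable lebesgue (ball x r) f)"

definition Linfty :: "(real^'n \<Rightarrow> real) set" where
  "Linfty = {f. f \<in> borel_measurable lebesgue \<and> (\<exists>C. AE x in lebesgue. \<bar>f x\<bar> \<le> C)}"

definition ball_mean :: "(real^'n \<Rightarrow> real) \<Rightarrow> (real^'n) set \<Rightarrow> real" where
  "ball_mean f B = (LINT y:B|lebesgue. f y) / measure lebesgue B"

definition log_weight :: "(real^'n) set \<Rightarrow> real" where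
  "log_weight B = ln (exp 1 + 1 / measure lebesgue B)"

definition BMO_Phi :: "(real^'n \<Rightarrow> real) set" where
  "BMO_Phi = {f. loc_integrable f \<and>
     (\<exists>C. \<forall>x r. r > 0 \<longrightarrow>
        log_weight (ball x r) / measure lebesgue (ball x r) *
          (LINT y:ball x r|lebesgue. \<bar>f y - ball_mean f (ball x r)\<bar>) \<le> C)}"

definition bmo_Phi :: "(real^'n \<Rightarrow> real) set" where
  "bmo_Phi = {f. loc_integrable f \<and>
     (\<exists>C. \<forall>x r. r > 0 \<longrightarrow> measure lebesgue (ball x r) < 1 \<longrightarrow>
        log_weight (ball x r) / measure lebesgue (ball x r) *
          (LINT y:ball x r|lebesgue. \<bar>f y - ball_mean f (ball x r)\<bar>) \<le> C) \<and>
     (\<exists>C. \<forall>x r. r > 0 \<longrightarrow> measure lebesgue (ball x r) \<ge> 1 \<longrightarrow>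
        log_weight (ball x r) / measure lebesgue (ball x r) *
          (LINT y:ball x r|lebesgue. \<bar>f y\<bar>) \<le> C)}"

end

theory Submission
  imports Defs
begin

text \<open>On balls of measure less than one the two conditions coincide. On a ball \<open>B\<close> with
  \<open>|B| \<ge> 1\<close> the weight \<open>log(e + 1/|B|)\<close> is bounded, the mean of \<open>|f|\<close> is at most
  \<open>\<parallel>f\<parallel>\<^sub>\<infinity>\<close>, and the mean oscillation is at most twice the mean of \<open>|f|\<close>; so for bounded
  \<open>f\<close> both large-ball conditions hold automatically.\<close>

definition Phi_oscillation :: "(real^'n \<Rightarrow> real) \<Rightarrow> (real^'n) set \<Rightarrow> real" where
  "Phi_oscillation f B =
     log_weight B / measure lebesgue B * (LINT y:B|lebesgue. \<bar>f y - ball_mean f B\<bar>)"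

definition Phi_average :: "(real^'n \<Rightarrow> real) \<Rightarrow> (real^'n) set \<Rightarrow> real" where
  "Phi_average f B = log_weight B / measure lebesgue B * (LINT y:B|lebesgue. \<bar>f y\<bar>)"

lemma BMO_Phi_iff:
  "f \<in> BMO_Phi \<longleftrightarrow>
     loc_integrable f \<and> (\<exists>C. \<forall>x r. r > 0 \<longrightarrow> Phi_oscillation f (ball x r) \<le> C)"
  by (simp add: BMO_Phi_def Phi_oscillation_def)

lemma bmo_Phi_iff:
  "f \<in> bmo_Phi \<longleftrightarrow> loc_integrable f \<and>
     (\<exists>C. \<forall>x r. r > 0 \<longrightarrow> measure lebesgue (ball x r) < 1 \<longrightarrow> Phi_oscillation f (ball x r) \<le> C) \<and>
     (\<exists>C. \<forall>x r. r > 0 \<longrightarrow> measure lebesgue (ball x r) \<ge> 1 \<longrightarrow> Phi_average f (ball x r) \<le> C)"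
  by (simp add: bmo_Phi_def Phi_oscillation_def Phi_average_def)

lemma set_integrable_ball: "loc_integrable f \<Longrightarrow> set_integrable lebesgue (ball x r) f"
  by (simp add: loc_integrable_def)

lemma set_integrable_const_fmeasurable:
  assumes "B \<in> fmeasurable M"
  shows "set_integrable M B (\<lambda>_. c :: real)"
  using assms integrable_real_indicator[of B M]
  by (simp add: set_integrable_def fmeasurable_def)

lemma set_integral_const_fmeasurable:
  "B \<in> fmeasurable M \<Longrightarrow> (LINT y:B|M. (c :: real)) = measure M B * c"
  by (subst set_integral_const) (auto simp: fmeasurable_def)

lemma log_weight_nonneg: "0 \<le> log_weight B"
  unfolding log_weight_def
  by (smt (verit) exp_ge_add_one_self ln_ge_zero measure_nonneg divide_nonneg_nonneg)

lemma log_weight_le_of_measure_ge_1: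
  assumes "1 \<le> measure lebesgue B"
  shows "log_weight B \<le> ln (exp 1 + 1)"
proof -
  have "1 / measure lebesgue B \<le> 1" using assms by simp
  then show ?thesis
    unfolding log_weight_def by (subst ln_le_cancel_iff) (auto intro: add_pos_nonneg)
qed

lemma Linfty_AE_bound:
  assumes "f \<in> Linfty"
  obtains C where "0 \<le> C" "AE x in lebesgue. \<bar>f x\<bar> \<le> C"
proof -
  obtain C where "AE x in lebesgue. \<bar>f x\<bar> \<le> C" using assms by (auto simp: Linfty_def)
  then have "AE x in lebesgue. \<bar>f x\<bar> \<le> max C 0" by (rule AE_mp) auto
  then show thesis by (rule that[rotated]) simp
qed

lemma set_integral_abs_le_of_AE_bound:
  assumes "B \<in> fmeasurable M" "set_integrable M B f" "AE x in M. \<bar>f x :: real\<bar> \<le> C"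
  shows "(LINT y:B|M. \<bar>f y\<bar>) \<le> measure M B * C"
proof -
  have "(LINT y:B|M. \<bar>f y\<bar>) \<le> (LINT y:B|M. C)"
    using assms
    by (intro set_integral_mono_AE set_integrable_abs set_integrable_const_fmeasurable)
       auto
  also have "\<dots> = measure M B * C" using assms(1) by (rule set_integral_const_fmeasurable)
  finally show ?thesis .
qed

lemma set_integral_abs_sub_mean_le:
  assumes B: "B \<in> lmeasurable" and f: "set_integrable lebesgue B f"
  shows "(LINT y:B|lebesgue. \<bar>f y - ball_mean f B\<bar>) \<le> 2 * (LINT y:B|lebesgue. \<bar>f y\<bar>)"
proof -
  let ?c = "ball_mean f B"
  have c: "set_integrable lebesgue B (\<lambda>_. \<bar>?c\<bar>)" using B by (rule set_integrable_const_fmeasurable)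
  have "(LINT y:B|lebesgue. \<bar>f y - ?c\<bar>) \<le> (LINT y:B|lebesgue. \<bar>f y\<bar> + \<bar>?c\<bar>)"
    using f c B
    by (intro set_integral_mono set_integrable_abs set_integral_diff(1) set_integral_add(1)
              set_integrable_const_fmeasurable) auto
  also have "\<dots> = (LINT y:B|lebesgue. \<bar>f y\<bar>) + measure lebesgue B * \<bar>?c\<bar>"
    using f c B by (simp add: set_integrable_abs set_integral_const_fmeasurable)
  also have "measure lebesgue B * \<bar>?c\<bar> \<le> \<bar>LINT y:B|lebesgue. f y\<bar>"
    by (cases "measure lebesgue B = 0") (simp_all add: ball_mean_def)
  also have "\<dots> \<le> (LINT y:B|lebesgue. \<bar>f y\<bar>)"
    using set_integral_norm_bound[OF f] by simp
  finally show ?thesis by simp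
qed

lemma Phi_oscillation_le_Phi_average:
  assumes "B \<in> lmeasurable" "set_integrable lebesgue B f"
  shows "Phi_oscillation f B \<le> 2 * Phi_average f B"
proof -
  have "0 \<le> log_weight B / measure lebesgue B" by (simp add: log_weight_nonneg)
  from mult_left_mono[OF set_integral_abs_sub_mean_le[OF assms] this] show ?thesis
    unfolding Phi_oscillation_def Phi_average_def by (simp only: mult.left_commute)
qed

lemma Linfty_Phi_average_bounded:
  assumes "f \<in> Linfty"
  obtains C where
    "\<And>B. B \<in> lmeasurable \<Longrightarrow> set_integrable lebesgue B f \<Longrightarrow> 1 \<le> measure lebesgue B \<Longrightarrow>
       Phi_average f B \<le> C"
proof -
  obtain C where C: "0 \<le> C" "AE x in lebesgue. \<bar>f x\<bar> \<le> C"
    using assms by (rule Linfty_AE_bound)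
  have "Phi_average f B \<le> ln (exp 1 + 1) * C"
    if B: "B \<in> lmeasurable" "set_integrable lebesgue B f" and large: "1 \<le> measure lebesgue B"
    for B
  proof -
    have "0 \<le> log_weight B / measure lebesgue B" by (simp add: log_weight_nonneg)
    from mult_left_mono[OF set_integral_abs_le_of_AE_bound[OF B C(2)] this]
    have "Phi_average f B \<le> log_weight B / measure lebesgue B * (measure lebesgue B * C)"
      unfolding Phi_average_def .
    also have "\<dots> = log_weight B * C" using large by simp
    also have "\<dots> \<le> ln (exp 1 + 1) * C"
      using log_weight_le_of_measure_ge_1[OF large] C(1) by (rule mult_right_mono)
    finally show ?thesis .
  qed
  then show thesis by (rule that)
qed

theorem lemma4p40:
  shows "(Linfty \<inter> BMO_Phi :: (real^'n \<Rightarrow> real) set) = Linfty \<inter> bmo_Phi"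
proof (intro set_eqI iffI)
  fix f :: "real^'n \<Rightarrow> real"
  assume "f \<in> Linfty \<inter> BMO_Phi"
  then obtain C1 C2 where f: "f \<in> Linfty" "loc_integrable f"
    and osc: "\<And>x r. r > 0 \<Longrightarrow> Phi_oscillation f (ball x r) \<le> C1"
    and large: "\<And>B. B \<in> lmeasurable \<Longrightarrow> set_integrable lebesgue B f \<Longrightarrow>
                  1 \<le> measure lebesgue B \<Longrightarrow> Phi_average f B \<le> C2"
    by (metis IntD1 IntD2 BMO_Phi_iff Linfty_Phi_average_bounded)
  have "\<forall>x r. r > 0 \<longrightarrow> measure lebesgue (ball x r) \<ge> 1 \<longrightarrow> Phi_average f (ball x r) \<le> C2"
    using large lmeasurable_ball set_integrable_ball[OF f(2)] by blast
  with f osc show "f \<in> Linfty \<inter> bmo_Phi" by (auto simp: bmo_Phi_iff)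
next
  fix f :: "real^'n \<Rightarrow> real"
  assume "f \<in> Linfty \<inter> bmo_Phi"
  then obtain C1 C2 where f: "f \<in> Linfty" "loc_integrable f"
    and small: "\<And>x r. r > 0 \<Longrightarrow> measure lebesgue (ball x r) < 1 \<Longrightarrow>
                  Phi_oscillation f (ball x r) \<le> C1"
    and large: "\<And>x r. r > 0 \<Longrightarrow> measure lebesgue (ball x r) \<ge> 1 \<Longrightarrow>
                  Phi_average f (ball x r) \<le> C2"
    by (auto simp: bmo_Phi_iff)
  have "Phi_oscillation f (ball x r) \<le> max C1 (2 * C2)" if r: "r > 0" for x r
  proof (cases "measure lebesgue (ball x r) < 1")
    case True
    with small[OF r, of x] show ?thesis by linarith
  next
    case False
    with large[OF r, of x] Phi_oscillation_le_Phi_average[OF lmeasurable_ball set_integrable_ball[OF f(2)]]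
    show ?thesis by (smt (verit) linorder_not_less)
  qed
  with f show "f \<in> Linfty \<inter> BMO_Phi" by (auto simp: BMO_Phi_iff)
qed

end
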